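(* Let $\mathbf{k}$ be a field, $\sigma\subset N_{\mathbb{Q}}$ a nonzero strongly convex polyhedral cone, and $\partial$ a nontrivial homogeneous LFIHD of degree $e$ on $A=\mathbf{k}[\sigma^\vee\cap M]$. Then: (i) there is a ray $\rho$ of $\sigma$ such that $\ker\partial=\mathbf{k}[\rho^\star\cap M]$, where $\rho^\star=\{m\in\sigma^\vee:\langle m,\rho\rangle=0\}$; (ii) $e$ is a Demazure root of $\sigma$ with distinguished ray $\rho$.
   Context: An LFIHD (locally finite iterative higher derivation) on a $\mathbf{k}$-algebra $A$ is a sequence $\partial=(\partial^{(i)})_{i\in\mathbb{N}}$ of $\mathbf{k}$-linear maps $A\to A$ with $\partial^{(0)}=\mathrm{id}$, $\partial^{(i)}(fg)=\sum_{j=0}^i\partial^{(j)}(f)\partial^{(i-j)}(g)$, for each $f$ there is $r$ with $\partial^{(i)}(f)=0$ for $i\ge r$, and $\partial^{(i)}\circ\partial^{(j)}=\binom{i+j}{i}\partial^{(i+j)}$. Its kernel is $\{f:\partial^{(i)}(f)=0\ \forall i>0\}$; it is trivial if the kernel is $A$. For an $M$-graded $A$, $\partial$ is homogeneous of degree $e\in M$ if $\partial^{(i)}(A_m)\subset A_{m+ie}$ for all $i,m$. A ray of $\sigma$ is identified with its primitive lattice vector in $N$. A Demazure root of $\sigma$ is $e\in M$ such that there is a ray $\rho$ of $\sigma$ with $\langle e,\rho\rangle=-1$ and $\langle e,\rho'\rangle\ge0$ for every other ray $\rho'$; $\rho$ is its distinguished ray. *)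

theory Defs
  imports "HOL-Analysis.Finite_Cartesian_Product" "HOL-Library.Poly_Mapping"
begin

text \<open>Lattices: N = M = int^'n (dual to each other via the standard pairing),
  N_Q = rat^'n, M_Q = rat^'n.\<close>

definition ratv :: "int ^ 'n::finite \<Rightarrow> rat ^ 'n" where
  "ratv m = (\<chi> i. of_int (m $ i))"

definition qpair :: "rat ^ 'n::finite \<Rightarrow> rat ^ 'n \<Rightarrow> rat" where
  "qpair u v = (\<Sum>i\<in>UNIV. u $ i * v $ i)"

definition ipair :: "int ^ 'n::finite \<Rightarrow> int ^ 'n \<Rightarrow> int" where
  "ipair m n = (\<Sum>i\<in>UNIV. m $ i * n $ i)"

definition polyhedral_cone :: "(rat ^ 'n::finite) set \<Rightarrow> bool" where
  "polyhedral_cone \<sigma> \<longleftrightarrow> (\<exists>G. finite G \<and>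
     \<sigma> = {(\<Sum>v\<in>G. c v *s v) | c. \<forall>v\<in>G. c v \<ge> 0})"

definition strongly_convex :: "(rat ^ 'n::finite) set \<Rightarrow> bool" where
  "strongly_convex \<sigma> \<longleftrightarrow> \<sigma> \<inter> uminus ` \<sigma> = {0}"

definition dual_lattice :: "(rat ^ 'n::finite) set \<Rightarrow> (int ^ 'n) set" where
  "dual_lattice \<sigma> = {m. \<forall>v\<in>\<sigma>. qpair (ratv m) v \<ge> 0}"

definition primitive :: "int ^ 'n::finite \<Rightarrow> bool" where
  "primitive \<rho> \<longleftrightarrow> \<rho> \<noteq> 0 \<and> (\<forall>w (k::int). \<rho> = k *s w \<longrightarrow> \<bar>k\<bar> = 1)"

text \<open>A ray (one-dimensional face) of sigma, identified with its primitive lattice generator.\<close>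
definition is_ray :: "(rat ^ 'n::finite) set \<Rightarrow> int ^ 'n \<Rightarrow> bool" where
  "is_ray \<sigma> \<rho> \<longleftrightarrow> primitive \<rho> \<and>
     (\<exists>u. (\<forall>v\<in>\<sigma>. qpair u v \<ge> 0) \<and>
          {v\<in>\<sigma>. qpair u v = 0} = {t *s ratv \<rho> | t. t \<ge> 0})"

definition rho_star :: "(rat ^ 'n::finite) set \<Rightarrow> int ^ 'n \<Rightarrow> (int ^ 'n) set" where
  "rho_star \<sigma> \<rho> = {m \<in> dual_lattice \<sigma>. ipair m \<rho> = 0}"

text \<open>The semigroup algebra k[S] for S a subset of M, as a subset of the group algebra k[M].\<close>
definition semigroup_alg :: "(int ^ 'n::finite) set \<Rightarrow> ((int ^ 'n) \<Rightarrow>\<^sub>0 'k::field) set" where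
  "semigroup_alg S = {f. Poly_Mapping.keys f \<subseteq> S}"

definition lfihd :: "(int ^ 'n::finite) set \<Rightarrow>
    (nat \<Rightarrow> ((int ^ 'n) \<Rightarrow>\<^sub>0 'k::field) \<Rightarrow> ((int ^ 'n) \<Rightarrow>\<^sub>0 'k)) \<Rightarrow> bool" where
  "lfihd S D \<longleftrightarrow>
     (\<forall>i. \<forall>f\<in>semigroup_alg S. D i f \<in> semigroup_alg S) \<and>
     (\<forall>i. \<forall>f\<in>semigroup_alg S. \<forall>g\<in>semigroup_alg S. D i (f + g) = D i f + D i g) \<and>
     (\<forall>i c. \<forall>f\<in>semigroup_alg S. D i (Poly_Mapping.single 0 c * f) = Poly_Mapping.single 0 c * D i f) \<and>
     (\<forall>f\<in>semigroup_alg S. D 0 f = f) \<and>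
     (\<forall>i. \<forall>f\<in>semigroup_alg S. \<forall>g\<in>semigroup_alg S.
        D i (f * g) = (\<Sum>j\<le>i. D j f * D (i - j) g)) \<and>
     (\<forall>f\<in>semigroup_alg S. \<exists>r. \<forall>i\<ge>r. D i f = 0) \<and>
     (\<forall>i j. \<forall>f\<in>semigroup_alg S. D i (D j f) = of_nat ((i + j) choose i) * D (i + j) f)"

definition lfihd_kernel :: "(int ^ 'n::finite) set \<Rightarrow>
    (nat \<Rightarrow> ((int ^ 'n) \<Rightarrow>\<^sub>0 'k::field) \<Rightarrow> ((int ^ 'n) \<Rightarrow>\<^sub>0 'k)) \<Rightarrow> ((int ^ 'n) \<Rightarrow>\<^sub>0 'k) set" where
  "lfihd_kernel S D = {f \<in> semigroup_alg S. \<forall>i>0. D i f = 0}"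

text \<open>Homogeneous of degree e w.r.t. the M-grading A_m = k chi^m (A_m = 0 for m outside S).\<close>
definition homogeneous_lfihd :: "(int ^ 'n::finite) set \<Rightarrow>
    (nat \<Rightarrow> ((int ^ 'n) \<Rightarrow>\<^sub>0 'k::field) \<Rightarrow> ((int ^ 'n) \<Rightarrow>\<^sub>0 'k)) \<Rightarrow> int ^ 'n \<Rightarrow> bool" where
  "homogeneous_lfihd S D e \<longleftrightarrow>
     (\<forall>i m c. m \<in> S \<longrightarrow> (\<exists>c'. D i (Poly_Mapping.single m c) = Poly_Mapping.single (m + int i *s e) c'))"

definition demazure_root_with :: "(rat ^ 'n::finite) set \<Rightarrow> int ^ 'n \<Rightarrow> int ^ 'n \<Rightarrow> bool" where
  "demazure_root_with \<sigma> e \<rho> \<longleftrightarrow> is_ray \<sigma> \<rho> \<and> ipair e \<rho> = -1 \<and>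
     (\<forall>\<rho>'. is_ray \<sigma> \<rho>' \<and> \<rho>' \<noteq> \<rho> \<longrightarrow> ipair e \<rho>' \<ge> 0)"

end

theory Submission
  imports Defs
begin

text \<open>Let \<open>deg m\<close> be the largest \<open>i\<close> with \<open>D i \<chi>\<^sup>m \<noteq> 0\<close>. Homogeneity and the Leibniz rule
  make \<open>deg\<close> additive on \<open>\<sigma>\<^sup>\<or> \<inter> M\<close>, which generates \<open>M\<close>, so \<open>deg m = \<langle>m, w\<rangle>\<close> for some
  \<open>w \<in> N\<close>, and \<open>w \<in> \<sigma>\<close> since \<open>deg \<ge> 0\<close>. The kernel is spanned by the characters of degree 0,
  i.e. by \<open>w\<^sup>\<star> \<inter> M\<close>. Up to a unit \<open>D deg(m) \<chi>\<^sup>m\<close> is the character of degree 0 at \<open>m + deg(m) e\<close>,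
  which gives \<open>\<langle>e, w\<rangle> = -1\<close> and shows that \<open>\<pi> v = v + \<langle>e, v\<rangle> w\<close> maps \<open>\<sigma>\<close> into itself. The
  kernel of \<open>\<pi>\<close> on \<open>\<sigma>\<close> is the half-line through \<open>w\<close>, hence a face, so \<open>w\<close> spans a ray; a ray
  \<open>\<rho>\<close> with \<open>\<langle>e, \<rho>\<rangle> < 0\<close> would be \<open>\<pi> \<rho>\<close> plus a positive multiple of \<open>w\<close>, forcing \<open>\<rho> = w\<close>.\<close>

lemma qpair_add_r[simp]: "qpair u (v + w) = qpair u v + qpair u w"
  by (simp add: qpair_def algebra_simps sum.distrib)

lemma qpair_add_l[simp]: "qpair (u + v) w = qpair u w + qpair v w"
  by (simp add: qpair_def algebra_simps sum.distrib)

lemma qpair_diff_r[simp]: "qpair u (v - w) = qpair u v - qpair u w"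
  by (simp add: qpair_def algebra_simps sum_subtractf)

lemma qpair_diff_l[simp]: "qpair (u - v) w = qpair u w - qpair v w"
  by (simp add: qpair_def algebra_simps sum_subtractf)

lemma qpair_minus_r[simp]: "qpair u (- v) = - qpair u v"
  by (simp add: qpair_def sum_negf)

lemma qpair_minus_l[simp]: "qpair (- u) v = - qpair u v"
  by (simp add: qpair_def sum_negf)

lemma qpair_smult_r[simp]: "qpair u (c *s v) = c * qpair u v"
  by (simp add: qpair_def sum_distrib_left algebra_simps)

lemma qpair_smult_l[simp]: "qpair (c *s u) v = c * qpair u v"
  by (simp add: qpair_def sum_distrib_left algebra_simps)

lemma qpair_zero_r[simp]: "qpair u 0 = 0" by (simp add: qpair_def)

lemma qpair_zero_l[simp]: "qpair 0 u = 0" by (simp add: qpair_def)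

lemma qpair_sum_r: "qpair u (\<Sum>x\<in>A. f x) = (\<Sum>x\<in>A. qpair u (f x))"
  by (induct A rule: infinite_finite_induct) auto

lemma qpair_sum_l: "qpair (\<Sum>x\<in>A. f x) u = (\<Sum>x\<in>A. qpair (f x) u)"
  by (induct A rule: infinite_finite_induct) auto

lemma qpair_self_pos:
  assumes "h \<noteq> 0"
  shows "qpair h h > 0"
proof -
  obtain i where i: "h $ i \<noteq> 0" using assms by (auto simp: vec_eq_iff)
  then have "0 < h $ i * h $ i" by (auto simp: zero_less_mult_iff linorder_neq_iff)
  also have "\<dots> \<le> (\<Sum>j\<in>UNIV. h $ j * h $ j)" by (rule member_le_sum) auto
  finally show ?thesis by (simp add: qpair_def)
qed

lemma ratv_add[simp]: "ratv (a + b) = ratv a + ratv b" by (simp add: ratv_def vec_eq_iff)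

lemma ratv_zero[simp]: "ratv 0 = 0" by (simp add: ratv_def vec_eq_iff)

lemma ratv_smult[simp]: "ratv (k *s a) = of_int k *s ratv a" by (simp add: ratv_def vec_eq_iff)

lemma ratv_inj: "ratv a = ratv b \<longleftrightarrow> a = b" by (simp add: ratv_def vec_eq_iff)

lemma ipair_qpair: "of_int (ipair m n) = qpair (ratv m) (ratv n)"
  by (simp add: ipair_def qpair_def ratv_def)

lemma ipair_add_l[simp]: "ipair (a + b) n = ipair a n + ipair b n"
  by (simp add: ipair_def algebra_simps sum.distrib)

lemma ipair_smult_l[simp]: "ipair (k *s a) n = k * ipair a n"
  by (simp add: ipair_def sum_distrib_left algebra_simps)

lemma ipair_smult_r[simp]: "ipair a (k *s n) = k * ipair a n"
  by (simp add: ipair_def sum_distrib_left algebra_simps)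


section \<open>Rational polyhedral cones and duality\<close>

definition cone_of :: "(rat ^ 'n::finite) set \<Rightarrow> (rat ^ 'n) set" where
  "cone_of G = {(\<Sum>v\<in>G. c v *s v) | c. \<forall>v\<in>G. c v \<ge> 0}"

lemma cone_ofI: "(\<forall>v\<in>G. c v \<ge> 0) \<Longrightarrow> x = (\<Sum>v\<in>G. c v *s v) \<Longrightarrow> x \<in> cone_of G"
  unfolding cone_of_def by blast

lemma cone_of_zero: "0 \<in> cone_of G"
  by (rule cone_ofI[of _ "\<lambda>_. 0"]) simp_all

lemma cone_of_add:
  assumes "x \<in> cone_of G" "y \<in> cone_of G"
  shows "x + y \<in> cone_of G"
proof -
  obtain c d where c: "x = (\<Sum>v\<in>G. c v *s v)" "\<forall>v\<in>G. c v \<ge> 0"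
    and d: "y = (\<Sum>v\<in>G. d v *s v)" "\<forall>v\<in>G. d v \<ge> 0"
    using assms unfolding cone_of_def by blast
  show ?thesis
    by (rule cone_ofI[of _ "\<lambda>v. c v + d v"])
      (use c d in \<open>auto simp: vector_sadd_rdistrib sum.distrib\<close>)
qed

lemma cone_of_smult:
  assumes "x \<in> cone_of G" "t \<ge> 0"
  shows "t *s x \<in> cone_of G"
proof -
  obtain c where c: "x = (\<Sum>v\<in>G. c v *s v)" "\<forall>v\<in>G. c v \<ge> 0"
    using assms unfolding cone_of_def by blast
  show ?thesis
    by (rule cone_ofI[of _ "\<lambda>v. t * c v"])
      (use c assms(2) in \<open>auto simp: sum_cmul[symmetric] vector_smult_assoc\<close>)
qed

lemma cone_of_generator: "finite G \<Longrightarrow> g \<in> G \<Longrightarrow> g \<in> cone_of G"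
  by (rule cone_ofI[of _ "\<lambda>v. if v = g then 1 else 0"])
    (auto simp: if_distrib[of "\<lambda>c. c *s _"] sum.delta' cong: if_cong)

lemma cone_of_sum:
  "finite I \<Longrightarrow> (\<And>i. i \<in> I \<Longrightarrow> c i \<ge> 0 \<and> x i \<in> cone_of G) \<Longrightarrow> (\<Sum>i\<in>I. c i *s x i) \<in> cone_of G"
  by (induct I rule: finite_induct) (auto intro: cone_of_add cone_of_smult cone_of_zero)

lemma cone_of_mono:
  assumes "finite H" "G \<subseteq> H"
  shows "cone_of G \<subseteq> cone_of H"
proof
  fix x assume "x \<in> cone_of G"
  then obtain c where c: "x = (\<Sum>v\<in>G. c v *s v)" "\<forall>v\<in>G. c v \<ge> 0"
    unfolding cone_of_def by blast
  show "x \<in> cone_of H"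
    unfolding c(1) using assms c(2) finite_subset
    by (intro cone_of_sum) (auto intro: cone_of_generator)
qed

lemma qpair_nonneg_cone_of:
  assumes "\<forall>g\<in>G. qpair a g \<ge> 0" "x \<in> cone_of G"
  shows "qpair a x \<ge> 0"
  using assms unfolding cone_of_def by (auto simp: qpair_sum_r sum_nonneg)

text \<open>The step of Fourier--Motzkin elimination: if a functional \<open>a\<close> is nonnegative on
  \<open>G\<close> but negative on \<open>g\<close> and \<open>h\<close>, projecting along \<open>g\<close> onto \<open>ker a\<close> reflects membership in the cone.\<close>
lemma mem_cone_of_insert_if_projection_mem:
  fixes a g h :: "rat ^ 'n::finite"
  defines "p \<equiv> \<lambda>y. qpair a g *s y - qpair a y *s g"
  assumes fin: "finite G" and a: "\<forall>y\<in>G. qpair a y \<ge> 0" "qpair a g < 0" "qpair a h < 0"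
    and proj: "p h \<in> cone_of (p ` G)"
  shows "h \<in> cone_of (insert g G)"
proof -
  obtain c where c: "p h = (\<Sum>y\<in>p ` G. c y *s y)" "\<forall>y\<in>p ` G. c y \<ge> 0"
    using proj unfolding cone_of_def by blast
  define pre where "pre y = inv_into G p y" for y
  have pre: "y \<in> p ` G \<Longrightarrow> pre y \<in> G \<and> p (pre y) = y" for y
    unfolding pre_def by (auto simp: inv_into_into f_inv_into_f)
  define x where "x = (\<Sum>y\<in>p ` G. c y *s pre y)"
  define \<beta> where "\<beta> = (\<Sum>y\<in>p ` G. c y * qpair a (pre y))"
  have x: "x \<in> cone_of (insert g G)"
    unfolding x_def using c pre fin by (intro cone_of_sum) (auto intro: cone_of_generator)
  have \<beta>: "\<beta> \<ge> 0"
    unfolding \<beta>_def using c pre a by (auto intro!: sum_nonneg)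
  have "p h = (\<Sum>y\<in>p ` G. c y *s p (pre y))"
    using c pre by (auto intro: sum.cong)
  also have "\<dots> = qpair a g *s x - \<beta> *s g"
    unfolding p_def x_def \<beta>_def
    by (simp add: vec_eq_iff sum_subtractf sum_distrib_left sum_distrib_right algebra_simps)
  finally have "h = x + ((qpair a h - \<beta>) / qpair a g) *s g"
    using a(2) by (simp add: p_def vec_eq_iff field_simps)
  moreover have "((qpair a h - \<beta>) / qpair a g) *s g \<in> cone_of (insert g G)"
    using a \<beta> fin by (intro cone_of_smult cone_of_generator divide_nonpos_neg) auto
  ultimately show ?thesis
    using x cone_of_add by metis
qed

lemma farkas:
  "finite G \<Longrightarrow> h \<notin> cone_of G \<Longrightarrow> \<exists>a. (\<forall>g\<in>G. qpair a g \<ge> 0) \<and> qpair a h < 0"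
proof (induction "card G" arbitrary: G h rule: less_induct)
  case less
  show ?case
  proof (cases "G = {}")
    case True
    then have "h \<noteq> 0" using less cone_of_zero by auto
    then show ?thesis using True qpair_self_pos[of h] by (intro exI[of _ "-h"]) auto
  next
    case False
    then obtain g G' where G: "G = insert g G'" "g \<notin> G'" by (meson Set.set_insert ex_in_conv)
    have fin: "finite G'" and card: "card G' < card G" using less G by auto
    have "h \<notin> cone_of G'" using less.prems cone_of_mono[of G G'] G by auto
    then obtain a where a: "\<forall>y\<in>G'. qpair a y \<ge> 0" "qpair a h < 0"
      using less.hyps[OF card fin] by blast
    show ?thesis
    proof (cases "qpair a g \<ge> 0")
      case True
      then show ?thesis using a G by (intro exI[of _ a]) auto
    next
      case False
      define p where "p y = qpair a g *s y - qpair a y *s g" for y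
      have "card (p ` G') < card G" using card_image_le[OF fin, of p] card by linarith
      moreover have "p h \<notin> cone_of (p ` G')"
        using mem_cone_of_insert_if_projection_mem[OF fin a(1) _ a(2)] False less.prems(2) G
        by (auto simp: p_def)
      ultimately obtain b where b: "\<forall>y\<in>p ` G'. qpair b y \<ge> 0" "qpair b (p h) < 0"
        using less.hyps fin by blast
      \<comment> \<open>\<open>b \<circ> p\<close> vanishes on \<open>g\<close>; rescaled by \<open>-1 / qpair a g > 0\<close> it separates \<open>h\<close> from \<open>G\<close>.\<close>
      define c where "c = (qpair b g / qpair a g) *s a - b"
      have c_p: "qpair c y = - qpair b (p y) / qpair a g" for y
        using False by (simp add: c_def p_def field_simps)
      have "qpair c g = 0" using c_p by (simp add: p_def)
      moreover have "qpair c y \<ge> 0" if "y \<in> G'" for y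
        using c_p b(1) that False by (simp add: divide_nonneg_neg)
      moreover have "qpair c h < 0"
        using c_p b(2) False by (simp add: divide_neg_neg)
      ultimately show ?thesis using G by (intro exI[of _ c]) auto
    qed
  qed
qed

lemma functional_positive_on_generators:
  assumes fin: "finite G" and sc: "strongly_convex (cone_of G)"
  shows "\<exists>u. \<forall>g\<in>G. qpair u g \<ge> 0 \<and> (g \<noteq> 0 \<longrightarrow> qpair u g > 0)"
proof -
  have "\<exists>a. (\<forall>g\<in>G. qpair a g \<ge> 0) \<and> qpair a g0 > 0" if g0: "g0 \<in> G" "g0 \<noteq> 0" for g0
  proof -
    have "- g0 \<notin> cone_of G"
    proof
      assume "- g0 \<in> cone_of G"
      then have "g0 \<in> cone_of G \<inter> uminus ` cone_of G"
        using g0 fin cone_of_generator by (auto intro: image_eqI[of _ _ "- g0"])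
      then show False using sc g0(2) unfolding strongly_convex_def by blast
    qed
    then show ?thesis using farkas[OF fin] by fastforce
  qed
  then obtain A where A: "\<And>g0. g0 \<in> G \<Longrightarrow> g0 \<noteq> 0 \<Longrightarrow> (\<forall>g\<in>G. qpair (A g0) g \<ge> 0) \<and> qpair (A g0) g0 > 0"
    by metis
  define G0 where "G0 = G - {0}"
  have "finite G0" using fin by (simp add: G0_def)
  have "qpair (\<Sum>g0\<in>G0. A g0) g \<ge> 0" if "g \<in> G" for g
    unfolding qpair_sum_l using A that by (auto simp: G0_def intro!: sum_nonneg)
  moreover have "qpair (\<Sum>g0\<in>G0. A g0) g > 0" if "g \<in> G" "g \<noteq> 0" for g
  proof -
    have "qpair (A g) g \<le> (\<Sum>g0\<in>G0. qpair (A g0) g)"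
      using that A \<open>finite G0\<close> by (intro member_le_sum) (auto simp: G0_def)
    then show ?thesis using A[OF that] unfolding qpair_sum_l by simp
  qed
  ultimately show ?thesis by blast
qed

lemma gordan:
  assumes fin: "finite G" and sc: "strongly_convex (cone_of G)"
  shows "\<exists>u. \<forall>v\<in>cone_of G. qpair u v \<ge> 0 \<and> (v \<noteq> 0 \<longrightarrow> qpair u v > 0)"
proof -
  obtain u where u: "\<forall>g\<in>G. qpair u g \<ge> 0 \<and> (g \<noteq> 0 \<longrightarrow> qpair u g > 0)"
    using functional_positive_on_generators[OF assms] by blast
  have nonneg: "qpair u v \<ge> 0" if "v \<in> cone_of G" for v
    using u that qpair_nonneg_cone_of[of G u v] by blast
  have "v = 0" if v: "v \<in> cone_of G" "qpair u v = 0" for v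
  proof -
    obtain c where c: "v = (\<Sum>g\<in>G. c g *s g)" "\<forall>g\<in>G. c g \<ge> 0"
      using v(1) unfolding cone_of_def by blast
    have terms_nonneg: "\<forall>g\<in>G. c g * qpair u g \<ge> 0" using c(2) u by simp
    have "(\<Sum>g\<in>G. c g * qpair u g) = 0" using c v(2) by (simp add: qpair_sum_r)
    then have terms_zero: "\<forall>g\<in>G. c g * qpair u g = 0"
      using sum_nonneg_eq_0_iff[OF fin, of "\<lambda>g. c g * qpair u g"] terms_nonneg by simp
    have "c g *s g = 0" if "g \<in> G" for g
    proof (cases "g = 0")
      case False
      then have "c g = 0" using u terms_zero that by fastforce
      then show ?thesis by simp
    qed simp
    then show ?thesis unfolding c(1) by (simp add: sum.neutral)
  qed
  then show ?thesis using nonneg by (metis order_le_less)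
qed

lemma exists_int_multiple: "\<exists>d::int. d > 0 \<and> (\<exists>m. ratv m = of_int d *s (a :: rat ^ 'n::finite))"
proof -
  define q where "q i = snd (quotient_of (a $ i))" for i
  define p where "p i = fst (quotient_of (a $ i))" for i
  have q_pos: "q i > 0" for i unfolding q_def using quotient_of_denom_pos' by blast
  have a: "a $ i = of_int (p i) / of_int (q i)" for i
    unfolding p_def q_def by (rule quotient_of_div) simp
  define d where "d = (\<Prod>i\<in>UNIV. q i)"
  define m where "m = (\<chi> i. (\<Prod>j\<in>UNIV - {i}. q j) * p i)"
  have "d > 0" unfolding d_def using q_pos by (simp add: prod_pos)
  moreover have "ratv m = of_int d *s a"
  proof (subst vec_eq_iff, intro allI)
    fix i
    have "d = q i * (\<Prod>j\<in>UNIV - {i}. q j)" unfolding d_def by (simp add: prod.remove)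
    then show "ratv m $ i = (of_int d *s a) $ i"
      unfolding ratv_def m_def using q_pos[of i] by (simp add: a field_simps)
  qed
  ultimately show ?thesis by blast
qed

lemma dual_lattice_cone_of_iff:
  "finite G \<Longrightarrow> m \<in> dual_lattice (cone_of G) \<longleftrightarrow> (\<forall>g\<in>G. qpair (ratv m) g \<ge> 0)"
  unfolding dual_lattice_def by (auto intro: cone_of_generator qpair_nonneg_cone_of)

lemma mem_cone_of_iff_dual_lattice:
  assumes "finite G"
  shows "h \<in> cone_of G \<longleftrightarrow> (\<forall>m\<in>dual_lattice (cone_of G). qpair (ratv m) h \<ge> 0)"
proof (intro iffI ballI)
  show "qpair (ratv m) h \<ge> 0" if "h \<in> cone_of G" "m \<in> dual_lattice (cone_of G)" for m
    using that unfolding dual_lattice_def by blast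
next
  assume nonneg: "\<forall>m\<in>dual_lattice (cone_of G). qpair (ratv m) h \<ge> 0"
  show "h \<in> cone_of G"
  proof (rule ccontr)
    assume "h \<notin> cone_of G"
    then obtain a where a: "\<forall>g\<in>G. qpair a g \<ge> 0" "qpair a h < 0" using farkas[OF assms] by blast
    obtain d m where dm: "d > 0" "ratv m = of_int d *s a" using exists_int_multiple[of a] by blast
    have "m \<in> dual_lattice (cone_of G)"
      unfolding dual_lattice_cone_of_iff[OF assms] dm(2) using a dm(1) by simp
    moreover have "qpair (ratv m) h < 0" unfolding dm(2) using a dm(1) by (simp add: mult_pos_neg)
    ultimately show False using nonneg by fastforce
  qed
qed

lemma exists_nat_shift_nonneg:
  assumes "finite G" and b: "\<forall>g\<in>G. qpair b g \<ge> 0 \<and> (g \<noteq> 0 \<longrightarrow> qpair b g > 0)"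
  shows "\<exists>N::nat. \<forall>g\<in>G. 0 \<le> qpair a g + of_nat N * qpair b g"
proof -
  have "eventually (\<lambda>N. 0 \<le> qpair a g + of_nat N * qpair b g) sequentially" if "g \<in> G" for g
  proof (cases "g = 0")
    case False
    then have pos: "qpair b g > 0" using b that by auto
    obtain n where n: "- qpair a g < of_nat n * qpair b g" using ex_less_of_nat_mult[OF pos] by blast
    show ?thesis
    proof (rule eventually_sequentiallyI[of n])
      fix N assume "n \<le> N"
      then have "of_nat n * qpair b g \<le> of_nat N * qpair b g"
        using pos by (intro mult_right_mono) auto
      then show "0 \<le> qpair a g + of_nat N * qpair b g" using n by linarith
    qed
  qed simp
  then have "eventually (\<lambda>N. \<forall>g\<in>G. 0 \<le> qpair a g + of_nat N * qpair b g) sequentially"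
    by (intro eventually_ball_finite[OF assms(1)]) blast
  then show ?thesis by (auto simp: eventually_sequentially)
qed

text \<open>For strongly convex \<open>\<sigma>\<close>, the cone \<open>\<sigma>\<^sup>\<or>\<close> is full-dimensional, so \<open>\<sigma>\<^sup>\<or> \<inter> M\<close> generates \<open>M\<close> as a group.\<close>
lemma dual_lattice_generates:
  assumes fin: "finite G" and sc: "strongly_convex (cone_of G)"
  shows "\<exists>p\<in>dual_lattice (cone_of G). p - m \<in> dual_lattice (cone_of G)"
proof -
  obtain u where u: "\<forall>g\<in>G. qpair u g \<ge> 0 \<and> (g \<noteq> 0 \<longrightarrow> qpair u g > 0)"
    using functional_positive_on_generators[OF assms] by blast
  obtain d m1 where dm: "d > 0" "ratv m1 = of_int d *s u" using exists_int_multiple[of u] by blast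
  have m1: "\<forall>g\<in>G. qpair (ratv m1) g \<ge> 0 \<and> (g \<noteq> 0 \<longrightarrow> qpair (ratv m1) g > 0)"
    using u dm by simp
  obtain N :: nat where N: "\<forall>g\<in>G. 0 \<le> qpair (ratv m) g + of_nat N * qpair (ratv m1) g"
    using exists_nat_shift_nonneg[OF fin m1] by blast
  show ?thesis
    using N m1 by (intro bexI[of _ "m + int N *s m1"]) (simp_all add: dual_lattice_cone_of_iff[OF fin])
qed

section \<open>Additive functions on lattices\<close>

lemma additive_extension:
  fixes S :: "'a::ab_group_add set" and \<nu> :: "'a \<Rightarrow> 'b::ab_group_add"
  assumes zero: "0 \<in> S" and add_mem: "\<And>a b. a \<in> S \<Longrightarrow> b \<in> S \<Longrightarrow> a + b \<in> S"
    and add: "\<And>a b. a \<in> S \<Longrightarrow> b \<in> S \<Longrightarrow> \<nu> (a + b) = \<nu> a + \<nu> b"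
    and generates: "\<And>m. \<exists>p\<in>S. p - m \<in> S"
  shows "\<exists>\<mu>. additive \<mu> \<and> (\<forall>m\<in>S. \<mu> m = \<nu> m)"
proof -
  define P where "P m = (SOME p. p \<in> S \<and> p - m \<in> S)" for m
  have P: "P m \<in> S" "P m - m \<in> S" for m
    unfolding P_def using someI_ex[OF generates[of m, unfolded Bex_def]] by auto
  define \<mu> where "\<mu> m = \<nu> (P m) - \<nu> (P m - m)" for m
  have \<mu>_diff: "\<mu> (p - q) = \<nu> p - \<nu> q" if "p \<in> S" "q \<in> S" for p q
  proof -
    have "P (p - q) + q = p + (P (p - q) - (p - q))" by (simp add: algebra_simps)
    then have "\<nu> (P (p - q)) + \<nu> q = \<nu> p + \<nu> (P (p - q) - (p - q))"
      using add P that by metis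
    then show ?thesis unfolding \<mu>_def by (simp add: algebra_simps)
  qed
  have "\<nu> 0 = 0" using add[OF zero zero] by simp
  then have "\<mu> m = \<nu> m" if "m \<in> S" for m using \<mu>_diff[OF that zero] by simp
  moreover have "additive \<mu>"
  proof
    fix x y
    have "x + y = (P x + P y) - ((P x - x) + (P y - y))" by (simp add: algebra_simps)
    then have "\<mu> (x + y) = \<nu> (P x + P y) - \<nu> ((P x - x) + (P y - y))"
      using \<mu>_diff P add_mem by metis
    then show "\<mu> (x + y) = \<mu> x + \<mu> y" unfolding \<mu>_def using P add by simp
  qed
  ultimately show ?thesis by blast
qed

lemma additive_int_smult:
  fixes \<mu> :: "int ^ 'n \<Rightarrow> 'b::ring_1"
  assumes "additive \<mu>"
  shows "\<mu> (k *s x) = of_int k * \<mu> x"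
proof (induction k rule: int_induct[of _ 0])
  case base
  show ?case using additive.zero[OF assms] by simp
next
  case (step1 k)
  have "(k + 1) *s x = k *s x + x" by (simp add: vector_sadd_rdistrib)
  then show ?case using step1 additive.add[OF assms] by (simp add: algebra_simps)
next
  case (step2 k)
  have "\<mu> ((k - 1) *s x) = \<mu> (k *s x - x)" by (simp add: vector_sub_rdistrib)
  also have "\<dots> = of_int (k - 1) * \<mu> x" using step2 additive.diff[OF assms] by (simp add: algebra_simps)
  finally show ?case .
qed

lemma additive_eq_ipair:
  fixes \<mu> :: "int ^ 'n::finite \<Rightarrow> int"
  assumes "additive \<mu>"
  shows "\<mu> m = ipair m (\<chi> i. \<mu> (axis i 1))"
proof -
  have "\<mu> m = \<mu> (\<Sum>i\<in>UNIV. (m $ i) *s axis i 1)" by (simp add: basis_expansion)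
  also have "\<dots> = (\<Sum>i\<in>UNIV. \<mu> ((m $ i) *s axis i 1))" by (rule additive.sum[OF assms])
  also have "\<dots> = (\<Sum>i\<in>UNIV. m $ i * \<mu> (axis i 1))"
    using additive_int_smult[OF assms] by simp
  finally show ?thesis unfolding ipair_def by simp
qed

section \<open>Homogeneous LFIHDs on semigroup algebras\<close>

lemma single_eq_0_iff: "Poly_Mapping.single k v = 0 \<longleftrightarrow> v = 0"
  by (metis lookup_single_eq single_zero lookup_zero)

lemma poly_mapping_sum_single_keys:
  "f = (\<Sum>m\<in>Poly_Mapping.keys f. Poly_Mapping.single m (Poly_Mapping.lookup f m))"
proof (rule poly_mapping_eqI)
  fix k
  have "Poly_Mapping.lookup (\<Sum>m\<in>Poly_Mapping.keys f. Poly_Mapping.single m (Poly_Mapping.lookup f m)) k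
      = (\<Sum>m\<in>Poly_Mapping.keys f. if m = k then Poly_Mapping.lookup f m else 0)"
    by (simp add: lookup_sum lookup_single when_def)
  also have "\<dots> = Poly_Mapping.lookup f k"
    by (simp add: sum.delta' in_keys_iff)
  finally show "Poly_Mapping.lookup f k
      = Poly_Mapping.lookup (\<Sum>m\<in>Poly_Mapping.keys f. Poly_Mapping.single m (Poly_Mapping.lookup f m)) k"
    by simp
qed

lemma semigroup_alg_add: "f \<in> semigroup_alg S \<Longrightarrow> g \<in> semigroup_alg S \<Longrightarrow> f + g \<in> semigroup_alg S"
  unfolding semigroup_alg_def using keys_add[of f g] by auto

lemma semigroup_alg_zero: "0 \<in> semigroup_alg S"
  unfolding semigroup_alg_def by simp

lemma single_mem_semigroup_alg: "m \<in> S \<Longrightarrow> Poly_Mapping.single m c \<in> semigroup_alg S"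
  unfolding semigroup_alg_def by simp

lemma semigroup_alg_sum: "(\<And>x. x \<in> A \<Longrightarrow> f x \<in> semigroup_alg S) \<Longrightarrow> sum f A \<in> semigroup_alg S"
  by (induct A rule: infinite_finite_induct) (auto intro: semigroup_alg_add semigroup_alg_zero)

definition character :: "'a \<Rightarrow> 'a \<Rightarrow>\<^sub>0 'b::zero_neq_one" where
  "character m = Poly_Mapping.single m 1"

lemma character_neq_0: "character m \<noteq> 0"
  by (simp add: character_def single_eq_0_iff)

lemma character_add: "character (a + b) = (character a * character b :: 'a::monoid_add \<Rightarrow>\<^sub>0 'b::semiring_1)"
  by (simp add: character_def mult_single)

locale graded_lfihd =
  fixes S :: "(int ^ 'n::finite) set"
    and D :: "nat \<Rightarrow> ((int ^ 'n) \<Rightarrow>\<^sub>0 'k::field) \<Rightarrow> ((int ^ 'n) \<Rightarrow>\<^sub>0 'k)"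
    and e :: "int ^ 'n"
  assumes lfihd: "lfihd S D" and homogeneous: "homogeneous_lfihd S D e"
    and zero_mem: "0 \<in> S" and add_mem: "a \<in> S \<Longrightarrow> b \<in> S \<Longrightarrow> a + b \<in> S"
begin

lemma D_mem: "f \<in> semigroup_alg S \<Longrightarrow> D i f \<in> semigroup_alg S"
  and D_add: "f \<in> semigroup_alg S \<Longrightarrow> g \<in> semigroup_alg S \<Longrightarrow> D i (f + g) = D i f + D i g"
  and D_const_mult: "f \<in> semigroup_alg S \<Longrightarrow>
     D i (Poly_Mapping.single 0 c * f) = Poly_Mapping.single 0 c * D i f"
  and D_0: "f \<in> semigroup_alg S \<Longrightarrow> D 0 f = f"
  and D_mult: "f \<in> semigroup_alg S \<Longrightarrow> g \<in> semigroup_alg S \<Longrightarrow>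
     D i (f * g) = (\<Sum>j\<le>i. D j f * D (i - j) g)"
  and D_eventually_0: "f \<in> semigroup_alg S \<Longrightarrow> \<exists>r. \<forall>i\<ge>r. D i f = 0"
  and D_D: "f \<in> semigroup_alg S \<Longrightarrow> D i (D j f) = of_nat ((i + j) choose i) * D (i + j) f"
  using lfihd unfolding lfihd_def by blast+

lemma character_mem: "m \<in> S \<Longrightarrow> character m \<in> semigroup_alg S"
  unfolding character_def by (rule single_mem_semigroup_alg)

definition coeff :: "nat \<Rightarrow> int ^ 'n \<Rightarrow> 'k" where
  "coeff i m = Poly_Mapping.lookup (D i (character m)) (m + int i *s e)"

lemma D_character:
  assumes "m \<in> S"
  shows "D i (character m) = Poly_Mapping.single (m + int i *s e) (coeff i m)"
proof -
  obtain c where "D i (character m) = Poly_Mapping.single (m + int i *s e) c"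
    using homogeneous assms unfolding homogeneous_lfihd_def character_def by blast
  then show ?thesis unfolding coeff_def by simp
qed

lemma D_single:
  assumes "m \<in> S"
  shows "D i (Poly_Mapping.single m c) = Poly_Mapping.single (m + int i *s e) (c * coeff i m)"
proof -
  have "Poly_Mapping.single m c = Poly_Mapping.single 0 c * character m"
    by (simp add: character_def mult_single)
  then show ?thesis
    using D_const_mult[OF character_mem] D_character assms by (simp add: mult_single)
qed

lemma D_sum_single:
  "finite A \<Longrightarrow> A \<subseteq> S \<Longrightarrow> D i (\<Sum>m\<in>A. Poly_Mapping.single m (c m))
     = (\<Sum>m\<in>A. Poly_Mapping.single (m + int i *s e) (c m * coeff i m))"
proof (induct A rule: finite_induct)
  case empty
  show ?case using D_add[OF semigroup_alg_zero semigroup_alg_zero, of i] by simp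
next
  case (insert x F)
  then show ?case
    by (simp add: D_add D_single single_mem_semigroup_alg semigroup_alg_sum subset_eq)
qed

definition degree :: "int ^ 'n \<Rightarrow> nat" where
  "degree m = (GREATEST i. D i (character m) \<noteq> 0)"

lemma
  assumes "m \<in> S"
  shows D_degree_neq_0: "D (degree m) (character m) \<noteq> 0"
    and D_above_degree: "i > degree m \<Longrightarrow> D i (character m) = 0"
proof -
  obtain r where r: "\<forall>i\<ge>r. D i (character m) = 0"
    using D_eventually_0[OF character_mem[OF assms]] by blast
  have bound: "i \<le> r" if "D i (character m) \<noteq> 0" for i
    using r that by (meson nat_le_linear)
  have "D 0 (character m) \<noteq> 0"
    using D_0[OF character_mem[OF assms]] character_neq_0 by simp
  then show "D (degree m) (character m) \<noteq> 0"
    unfolding degree_def by (rule GreatestI_nat[OF _ bound])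
  show "D i (character m) = 0" if "i > degree m"
    using Greatest_le_nat[of "\<lambda>i. D i (character m) \<noteq> 0", OF _ bound] that
    unfolding degree_def by fastforce
qed

lemma degree_eqI:
  assumes "m \<in> S" "D d (character m) \<noteq> 0" "\<And>i. i > d \<Longrightarrow> D i (character m) = 0"
  shows "degree m = d"
  using D_degree_neq_0 D_above_degree assms by (metis linorder_neqE_nat)

lemma degree_eq_0_iff: "m \<in> S \<Longrightarrow> degree m = 0 \<longleftrightarrow> (\<forall>i>0. D i (character m) = 0)"
  using D_degree_neq_0 D_above_degree by (metis gr0I)

lemma coeff_degree_neq_0: "m \<in> S \<Longrightarrow> coeff (degree m) m \<noteq> 0"
  using D_degree_neq_0 D_character by (fastforce simp: single_eq_0_iff)

lemma degree_add:
  assumes m: "m \<in> S" and m': "m' \<in> S"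
  shows "degree (m + m') = degree m + degree m'"
proof -
  define a b where "a = degree m" and "b = degree m'"
  have Leibniz: "D i (character (m + m')) = (\<Sum>j\<le>i. D j (character m) * D (i - j) (character m'))" for i
    using D_mult[OF character_mem[OF m] character_mem[OF m']] by (simp add: character_add)
  have vanish: "D j (character m) * D (i - j) (character m') = 0" if "j > a \<or> i - j > b" for i j
    using that D_above_degree[OF m] D_above_degree[OF m'] by (auto simp: a_def b_def)
  have "D i (character (m + m')) = 0" if "i > a + b" for i
    unfolding Leibniz using that by (intro sum.neutral ballI vanish) auto
  moreover have "D (a + b) (character (m + m')) = D a (character m) * D b (character m')"
    unfolding Leibniz
    by (subst sum.remove[of _ a]) (auto intro!: sum.neutral vanish)
  moreover have "D a (character m) * D b (character m') \<noteq> 0"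
    using D_character m m' coeff_degree_neq_0 by (simp add: a_def b_def mult_single single_eq_0_iff)
  ultimately show ?thesis
    using add_mem[OF m m'] by (intro degree_eqI) (auto simp: a_def b_def)
qed

lemma D_vanishes_iff_degree_eq_0:
  assumes f: "f \<in> semigroup_alg S"
  shows "(\<forall>i>0. D i f = 0) \<longleftrightarrow> (\<forall>m\<in>Poly_Mapping.keys f. degree m = 0)"
proof -
  have keys: "Poly_Mapping.keys f \<subseteq> S" using f unfolding semigroup_alg_def by simp
  have D_f: "D i f = (\<Sum>m\<in>Poly_Mapping.keys f.
      Poly_Mapping.single (m + int i *s e) (Poly_Mapping.lookup f m * coeff i m))" for i
    by (subst poly_mapping_sum_single_keys[of f], rule D_sum_single[OF finite_keys keys])
  \<comment> \<open>distinct keys stay distinct after the shift by \<open>i e\<close>, so no cancellation occurs\<close>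
  have lookup_D_f: "Poly_Mapping.lookup (D i f) (m + int i *s e) = Poly_Mapping.lookup f m * coeff i m"
    if "m \<in> Poly_Mapping.keys f" for i m
  proof -
    have "Poly_Mapping.lookup (D i f) (m + int i *s e)
        = (\<Sum>m'\<in>Poly_Mapping.keys f. if m' = m then Poly_Mapping.lookup f m' * coeff i m' else 0)"
      unfolding D_f lookup_sum by (intro sum.cong) (auto simp: lookup_single when_def)
    then show ?thesis using that by (simp add: sum.delta')
  qed
  show ?thesis
  proof
    assume vanishes: "\<forall>i>0. D i f = 0"
    show "\<forall>m\<in>Poly_Mapping.keys f. degree m = 0"
    proof (rule ballI, rule ccontr)
      fix m assume m: "m \<in> Poly_Mapping.keys f" and "degree m \<noteq> 0"
      then have "Poly_Mapping.lookup (D (degree m) f) (m + int (degree m) *s e) = 0"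
        using vanishes by simp
      then show False
        using lookup_D_f[OF m] coeff_degree_neq_0 m keys by (auto simp: in_keys_iff)
    qed
  next
    assume degree_0: "\<forall>m\<in>Poly_Mapping.keys f. degree m = 0"
    have "coeff i m = 0" if "i > 0" "m \<in> Poly_Mapping.keys f" for i m
    proof -
      have "D i (character m) = 0" using that degree_0 keys degree_eq_0_iff by blast
      then show ?thesis using D_character that keys by (auto simp: single_eq_0_iff)
    qed
    then show "\<forall>i>0. D i f = 0" unfolding D_f by (auto intro: sum.neutral)
  qed
qed

lemma shift_mem: "m \<in> S \<Longrightarrow> m + int (degree m) *s e \<in> S"
  using D_mem[OF character_mem] D_character coeff_degree_neq_0
  by (fastforce simp: semigroup_alg_def)

text \<open>Up to a unit, \<open>D d \<chi>\<^sup>m\<close> is the character of the shifted weight, and \<open>D i \<circ> D d\<close> is a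
  multiple of \<open>D (i + d)\<close>, which vanishes on \<open>\<chi>\<^sup>m\<close> for \<open>i > 0\<close>.\<close>
lemma degree_shift_eq_0:
  assumes m: "m \<in> S"
  shows "degree (m + int (degree m) *s e) = 0"
proof -
  define d c where "d = degree m" and "c = coeff d m"
  have "c \<noteq> 0" using coeff_degree_neq_0[OF m] by (simp add: c_def d_def)
  then have char: "character (m + int d *s e) = Poly_Mapping.single 0 (1 / c) * D d (character m)"
    using D_character[OF m] by (simp add: character_def mult_single c_def)
  have "D i (D d (character m)) = 0" if "i > 0" for i
    using D_D[OF character_mem[OF m]] D_above_degree[OF m, of "i + d"] that by (simp add: d_def)
  then have "D i (character (m + int d *s e)) = 0" if "i > 0" for i
    unfolding char using D_const_mult[OF D_mem[OF character_mem[OF m]]] that by simp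
  then show ?thesis using degree_eq_0_iff[OF shift_mem[OF m]] by (simp add: d_def)
qed

lemma degree_eq_ipair:
  assumes "\<And>m. \<exists>p\<in>S. p - m \<in> S"
  obtains w where "\<And>m. m \<in> S \<Longrightarrow> int (degree m) = ipair m w"
proof -
  obtain \<mu> where "additive \<mu>" "\<forall>m\<in>S. \<mu> m = int (degree m)"
    using additive_extension[of S "\<lambda>m. int (degree m)"] zero_mem add_mem degree_add assms by auto
  then show ?thesis using that additive_eq_ipair by metis
qed

context
  fixes w :: "int ^ 'n"
  assumes degree_w: "\<And>m. m \<in> S \<Longrightarrow> int (degree m) = ipair m w"
begin

lemma ipair_shift_eq_0: "m \<in> S \<Longrightarrow> ipair (m + int (degree m) *s e) w = 0"
  using degree_w[OF shift_mem] degree_shift_eq_0 by simp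

lemma ipair_e_w_eq_neg1:
  assumes "lfihd_kernel S D \<noteq> semigroup_alg S"
  shows "ipair e w = -1"
proof -
  obtain f where f: "f \<in> semigroup_alg S" "\<not> (\<forall>i>0. D i f = 0)"
    using assms unfolding lfihd_kernel_def by blast
  then obtain m where m: "m \<in> Poly_Mapping.keys f" "degree m \<noteq> 0"
    using D_vanishes_iff_degree_eq_0 by blast
  have "m \<in> S" using f(1) m(1) unfolding semigroup_alg_def by blast
  then have "int (degree m) * (1 + ipair e w) = 0"
    using ipair_shift_eq_0[of m] degree_w[of m] by (simp add: algebra_simps)
  then show ?thesis using m(2) by simp
qed

lemma lfihd_kernel_eq: "lfihd_kernel S D = semigroup_alg {m \<in> S. ipair m w = 0}"
proof -
  have "{m \<in> S. ipair m w = 0} = {m \<in> S. degree m = 0}" using degree_w by force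
  then show ?thesis
    using D_vanishes_iff_degree_eq_0
    unfolding lfihd_kernel_def semigroup_alg_def by blast
qed

end

end

section \<open>Rays and Demazure roots\<close>

lemma primitive_if_ipair_eq_neg1:
  assumes "ipair e w = -1"
  shows "primitive w"
  unfolding primitive_def
proof (intro conjI allI impI)
  show "w \<noteq> 0" using assms by (auto simp: ipair_def)
next
  fix w' and k :: int
  assume "w = k *s w'"
  then have "\<bar>k * ipair e w'\<bar> = 1" using assms by simp
  then show "\<bar>k\<bar> = 1" by (rule abs_zmult_eq_1)
qed

lemma adjoint_shift_mem_cone_of:
  assumes fin: "finite G"
    and shift: "\<And>m. m \<in> dual_lattice (cone_of G) \<Longrightarrow> m + ipair m w *s e \<in> dual_lattice (cone_of G)"
    and v: "v \<in> cone_of G"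
  shows "v + qpair (ratv e) v *s ratv w \<in> cone_of G"
  unfolding mem_cone_of_iff_dual_lattice[OF fin]
proof
  fix m assume m: "m \<in> dual_lattice (cone_of G)"
  have "qpair (ratv m) (v + qpair (ratv e) v *s ratv w) = qpair (ratv (m + ipair m w *s e)) v"
    by (simp add: ipair_qpair algebra_simps)
  also have "\<dots> \<ge> 0"
    using shift[OF m] v unfolding dual_lattice_def by blast
  finally show "qpair (ratv m) (v + qpair (ratv e) v *s ratv w) \<ge> 0" .
qed

lemma nonneg_if_smult_mem_strongly_convex:
  assumes sc: "strongly_convex (cone_of G)" and x: "x \<in> cone_of G" "x \<noteq> 0"
    and tx: "t *s x \<in> cone_of G"
  shows "t \<ge> 0"
proof (rule ccontr)
  assume "\<not> t \<ge> 0"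
  then have "- x = (- 1 / t) *s (t *s x)" by (simp add: vector_sneg_minus1 vector_smult_assoc)
  then have "- x \<in> cone_of G" using cone_of_smult[OF tx] \<open>\<not> t \<ge> 0\<close> by simp
  then have "x \<in> cone_of G \<inter> uminus ` cone_of G" using x(1) by (auto intro: image_eqI[of _ _ "- x"])
  then show False using sc x(2) unfolding strongly_convex_def by blast
qed

text \<open>The face cut out by the functional \<open>u \<circ> \<pi>\<close>, with \<open>u\<close> strictly positive on \<open>\<sigma> - 0\<close> and
  \<open>\<pi> v = v + \<langle>e, v\<rangle> w\<close>, is the kernel of \<open>\<pi>\<close> in \<open>\<sigma>\<close>, i.e. the half-line through \<open>w\<close>.\<close>
lemma is_ray_if_shift_invariant:
  assumes fin: "finite G" and sc: "strongly_convex (cone_of G)"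
    and e_w: "ipair e w = -1" and w: "ratv w \<in> cone_of G"
    and shift: "\<forall>v\<in>cone_of G. v + qpair (ratv e) v *s ratv w \<in> cone_of G"
  shows "is_ray (cone_of G) w"
proof -
  define \<pi> where "\<pi> v = v + qpair (ratv e) v *s ratv w" for v
  have e_w': "qpair (ratv e) (ratv w) = -1" using e_w ipair_qpair[of e w] by simp
  have \<pi>_mem: "\<forall>v\<in>cone_of G. \<pi> v \<in> cone_of G" using shift by (simp add: \<pi>_def)
  obtain u0 where u0: "\<forall>v\<in>cone_of G. qpair u0 v \<ge> 0 \<and> (v \<noteq> 0 \<longrightarrow> qpair u0 v > 0)"
    using gordan[OF fin sc] by blast
  define u where "u = u0 + qpair u0 (ratv w) *s ratv e"
  have u: "qpair u v = qpair u0 (\<pi> v)" for v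
    unfolding u_def \<pi>_def by (simp add: algebra_simps)
  have "{v \<in> cone_of G. qpair u v = 0} = {t *s ratv w | t. t \<ge> 0}"
  proof (intro set_eqI iffI)
    fix v assume "v \<in> {v \<in> cone_of G. qpair u v = 0}"
    then have v: "v \<in> cone_of G" "\<pi> v = 0" using u u0 \<pi>_mem by fastforce+
    define t where "t = - qpair (ratv e) v"
    have v_t: "v = t *s ratv w"
      using v(2) unfolding \<pi>_def t_def by (simp add: vector_smult_lneg eq_neg_iff_add_eq_0)
    have "ratv w \<noteq> 0" using e_w' by auto
    then have "t \<ge> 0"
      using v(1) unfolding v_t by (rule nonneg_if_smult_mem_strongly_convex[OF sc w])
    then show "v \<in> {t *s ratv w | t. t \<ge> 0}" using v_t by blast
  next
    fix v assume "v \<in> {t *s ratv w | t. t \<ge> 0}"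
    then obtain t where t: "v = t *s ratv w" "t \<ge> 0" by blast
    then have "\<pi> v = 0" unfolding \<pi>_def using e_w' by (simp add: vector_smult_lneg)
    then show "v \<in> {v \<in> cone_of G. qpair u v = 0}" using u t cone_of_smult[OF w] by simp
  qed
  moreover have "\<forall>v\<in>cone_of G. qpair u v \<ge> 0" unfolding u using u0 \<pi>_mem by blast
  ultimately show ?thesis unfolding is_ray_def using primitive_if_ipair_eq_neg1[OF e_w] by blast
qed

lemma ray_in_face:
  assumes "\<forall>v\<in>\<sigma>. qpair u v \<ge> 0" "{v \<in> \<sigma>. qpair u v = 0} = {t *s ratv \<rho> | t. t \<ge> 0}"
  shows "ratv \<rho> \<in> \<sigma>" "qpair u (ratv \<rho>) = 0"
proof -
  have "ratv \<rho> \<in> {t *s ratv \<rho> | t. t \<ge> 0}" by (rule CollectI, rule exI[of _ 1]) simp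
  then show "ratv \<rho> \<in> \<sigma>" "qpair u (ratv \<rho>) = 0" using assms(2) by blast+
qed

lemma ray_extremal:
  assumes ray: "is_ray \<sigma> \<rho>" and "a \<in> \<sigma>" "x \<in> \<sigma>" "s > 0" and \<rho>: "ratv \<rho> = a + s *s x"
  shows "\<exists>t\<ge>0. x = t *s ratv \<rho>"
proof -
  obtain u where u: "\<forall>v\<in>\<sigma>. qpair u v \<ge> 0" "{v \<in> \<sigma>. qpair u v = 0} = {t *s ratv \<rho> | t. t \<ge> 0}"
    using ray unfolding is_ray_def by blast
  have "qpair u a + s * qpair u x = 0" using ray_in_face(2)[OF u] unfolding \<rho> by simp
  moreover have "qpair u a \<ge> 0" "s * qpair u x \<ge> 0" using u(1) assms(2-4) by simp_all
  ultimately have "s * qpair u x = 0" by linarith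
  then have "qpair u x = 0" using \<open>s > 0\<close> by simp
  then show ?thesis using u(2) assms(3) by blast
qed

text \<open>A ray \<open>\<rho>\<close> with \<open>c = \<langle>e, \<rho>\<rangle> < 0\<close> decomposes as \<open>\<pi> \<rho> + (-c) w\<close>, so by extremality \<open>w\<close> lies on
  \<open>\<rho>\<close>; pairing with \<open>e\<close> and primitivity then force \<open>\<rho> = w\<close>.\<close>
lemma ipair_nonneg_other_ray:
  assumes ray: "is_ray \<sigma> \<rho>" and "\<rho> \<noteq> w" and e_w: "ipair e w = -1" and w: "ratv w \<in> \<sigma>"
    and shift: "\<forall>v\<in>\<sigma>. v + qpair (ratv e) v *s ratv w \<in> \<sigma>"
  shows "ipair e \<rho> \<ge> 0"
proof (rule ccontr)
  define c where "c = ipair e \<rho>"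
  assume "\<not> ipair e \<rho> \<ge> 0"
  then have c: "c < 0" by (simp add: c_def)
  have e_\<rho>: "qpair (ratv e) (ratv \<rho>) = of_int c" by (simp add: c_def ipair_qpair)
  have "ratv \<rho> \<in> \<sigma>" using ray ray_in_face(1) unfolding is_ray_def by blast
  then have "ratv \<rho> + qpair (ratv e) (ratv \<rho>) *s ratv w \<in> \<sigma>" using shift by blast
  moreover have "ratv \<rho> = (ratv \<rho> + qpair (ratv e) (ratv \<rho>) *s ratv w) + (- of_int c) *s ratv w"
    by (simp add: e_\<rho> vector_smult_lneg)
  ultimately obtain t where t: "ratv w = t *s ratv \<rho>"
    using ray_extremal[OF ray _ w] c by fastforce
  then have "t * of_int c = -1" using e_w e_\<rho> ipair_qpair[of e w] by simp
  then have "ratv \<rho> = ratv ((- c) *s w)"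
    by (simp add: t vector_smult_assoc algebra_simps)
  then have \<rho>_w: "\<rho> = (- c) *s w" by (simp only: ratv_inj)
  then have "c = -1" using ray c unfolding is_ray_def primitive_def by force
  then show False using \<rho>_w assms(2) by simp
qed

theorem lemma5p4p3:
  fixes \<sigma> :: "(rat ^ 'n::finite) set"
    and D :: "nat \<Rightarrow> ((int ^ 'n) \<Rightarrow>\<^sub>0 'k::field) \<Rightarrow> ((int ^ 'n) \<Rightarrow>\<^sub>0 'k)"
    and e :: "int ^ 'n"
  assumes "polyhedral_cone \<sigma>" and "strongly_convex \<sigma>" and "\<sigma> \<noteq> {0}"
    and "lfihd (dual_lattice \<sigma>) D"
    and "lfihd_kernel (dual_lattice \<sigma>) D \<noteq> semigroup_alg (dual_lattice \<sigma>)"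
    and "homogeneous_lfihd (dual_lattice \<sigma>) D e"
  shows "\<exists>\<rho>. is_ray \<sigma> \<rho> \<and>
           lfihd_kernel (dual_lattice \<sigma>) D = semigroup_alg (rho_star \<sigma> \<rho>) \<and>
           demazure_root_with \<sigma> e \<rho>"
proof -
  obtain G where fin: "finite G" and \<sigma>: "\<sigma> = cone_of G"
    using assms(1) unfolding polyhedral_cone_def cone_of_def by blast
  have sc: "strongly_convex (cone_of G)" using assms(2) \<sigma> by simp
  interpret graded_lfihd "dual_lattice \<sigma>" D e
    using assms(4,6) by unfold_locales (auto simp: dual_lattice_def)
  obtain w where w: "\<And>m. m \<in> dual_lattice \<sigma> \<Longrightarrow> int (degree m) = ipair m w"
    using degree_eq_ipair dual_lattice_generates[OF fin sc] \<sigma> by metis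
  have e_w: "ipair e w = -1" by (rule ipair_e_w_eq_neg1[OF w assms(5)])
  have w_mem: "ratv w \<in> \<sigma>"
    unfolding \<sigma> mem_cone_of_iff_dual_lattice[OF fin] using w \<sigma> by (simp flip: ipair_qpair) (metis of_nat_0_le_iff)
  have shift: "\<forall>v\<in>\<sigma>. v + qpair (ratv e) v *s ratv w \<in> \<sigma>"
    unfolding \<sigma> using adjoint_shift_mem_cone_of[OF fin] shift_mem w \<sigma> by metis
  have ray: "is_ray \<sigma> w" using is_ray_if_shift_invariant[OF fin sc e_w] w_mem shift \<sigma> by simp
  moreover have "lfihd_kernel (dual_lattice \<sigma>) D = semigroup_alg (rho_star \<sigma> w)"
    using lfihd_kernel_eq[OF w] unfolding rho_star_def .
  moreover have "demazure_root_with \<sigma> e w"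
    unfolding demazure_root_with_def using ray e_w ipair_nonneg_other_ray[OF _ _ e_w w_mem shift] by blast
  ultimately show ?thesis by blast
qed

end
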